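(* Let $0<\lambda<1$, identify $\mathbb R^2$ with $\mathbb C$, let $f_j(z)=1+\theta_jz$ with $\theta_j=\lambda e^{(-1)^j i\pi/3}$ for $j=1,2$, let $A$ be the unique nonempty compact set with $A=f_1(A)\cup f_2(A)$, and let $Y=\{(x,y)\colon x=0\}$. Then for $j=1,2$, \[\mathrm{dist}(Y,f_j(A))=\mathrm{dist}(Y,A)\ge 1+\frac\lambda2-\frac{\lambda^2(1+2\lambda)}{2(1-\lambda^2)},\] and \[\mathrm{dist}(f_1(A),f_2(A))\ge\sqrt3\,\lambda-\sqrt3\,\frac{\lambda^3}{1-\lambda}.\]
   Context: For sets $S_1,S_2\subset\mathbb R^2$, $\mathrm{dist}(S_1,S_2)=\inf\{|x-y|\colon x\in S_1,y\in S_2\}$. *)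

theory Defs
  imports "HOL-Analysis.Analysis"
begin

definition theta :: "real \<Rightarrow> nat \<Rightarrow> complex" where
  "theta lam j = complex_of_real lam * exp ((-1) ^ j * \<i> * complex_of_real (pi / 3))"

definition fmap :: "real \<Rightarrow> nat \<Rightarrow> complex \<Rightarrow> complex" where
  "fmap lam j z = 1 + theta lam j * z"

definition Yline :: "complex set" where
  "Yline = {z. Re z = 0}"

end

theory Submission
  imports Defs
begin

(*
  A compact set A with A \<subseteq> f_1(A) \<union> f_2(A) lies in every nonempty closed set S that f_1 and f_2
  map into itself: a point of A farthest from S is f_j(a) for some a in A, and its distance to S
  is at most lambda times that of a.

  Hexagons with outer normals u_k = e^(i(alpha + k pi/3)) are such sets for suitable support
  values h_k.  Because theta_1 and theta_2 are lambda times rotations by -pi/3 and pi/3, the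
  support of f_1(hexagon) in direction u_k is at most Re u_k + lambda h_(k+1), and that of
  f_2(hexagon) at most Re u_k + lambda h_(k-1).  The hexagon with alpha = 0 bounds Re A from below.  The one with
  alpha = pi/6 bounds Im f_1(A) from above and Im f_2(A) from below.

  By uniqueness of the attractor, A is symmetric under conjugation.  Conjugation fixes Y and swaps
  f_1(A) with f_2(A), so both halves are as far from Y as A is.
*)

lemma infdist_image_le:
  assumes f: "c-lipschitz_on UNIV f" and S: "f ` S \<subseteq> S" "S \<noteq> {}"
  shows "infdist (f x) S \<le> c * infdist x S"
proof (cases "c = 0")
  case True
  obtain s where "s \<in> S" using S(2) by blast
  then have "f x = f s" using lipschitz_onD[OF f, of x s] True by simp
  then have "f x \<in> S" using S(1) \<open>s \<in> S\<close> by blast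
  then show ?thesis using True by simp
next
  case False
  then have "0 < c" using lipschitz_on_nonneg[OF f] by simp
  have "infdist (f x) S / c \<le> infdist x S"
    unfolding infdist_eq_setdist
  proof (rule le_setdistI)
    fix x' s assume "x' \<in> {x}" "s \<in> S"
    have "setdist {f x} S \<le> dist (f x) (f s)"
      using S(1) \<open>s \<in> S\<close> by (intro setdist_le_dist) auto
    also have "\<dots> \<le> c * dist x s"
      using lipschitz_onD[OF f] by simp
    finally show "setdist {f x} S / c \<le> dist x' s"
      using \<open>0 < c\<close> \<open>x' \<in> {x}\<close> by (simp add: field_simps)
  qed (use S(2) in auto)
  then show ?thesis using \<open>0 < c\<close> by (simp add: field_simps)
qed

lemma self_covering_subset_invariant:
  fixes f :: "'i \<Rightarrow> 'a::metric_space \<Rightarrow> 'a"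
  assumes contr: "c < 1" "\<And>j. j \<in> J \<Longrightarrow> c-lipschitz_on UNIV (f j)"
    and S: "closed S" "S \<noteq> {}" "\<And>j. j \<in> J \<Longrightarrow> f j ` S \<subseteq> S"
    and A: "compact A" "A \<subseteq> (\<Union>j\<in>J. f j ` A)"
  shows "A \<subseteq> S"
proof (cases "A = {}")
  case False
  have "continuous_on A (\<lambda>a. infdist a S)" by (intro continuous_intros)
  then obtain a0 where a0: "a0 \<in> A" and max: "\<And>a. a \<in> A \<Longrightarrow> infdist a S \<le> infdist a0 S"
    using continuous_attains_sup[OF A(1) False] by blast
  obtain j a1 where j: "j \<in> J" and a1: "a1 \<in> A" and "a0 = f j a1"
    using A(2) a0 by blast
  then have "infdist a0 S \<le> c * infdist a1 S"
    using infdist_image_le[OF contr(2) S(3) S(2)] by simp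
  also have "\<dots> \<le> c * infdist a0 S"
    using max[OF a1] lipschitz_on_nonneg[OF contr(2)[OF j]] by (simp add: mult_left_mono)
  finally have "infdist a0 S = 0"
    using contr(1) infdist_nonneg[of a0 S] by (simp add: mult_le_cancel_right1 not_le)
  then have "infdist a S = 0" if "a \<in> A" for a
    using max[OF that] infdist_nonneg[of a S] by simp
  then show ?thesis
    using in_closed_iff_infdist_zero[OF S(1,2)] by blast
qed simp

lemma self_similar_unique:
  fixes f :: "'i \<Rightarrow> 'a::metric_space \<Rightarrow> 'a"
  assumes contr: "c < 1" "\<And>j. j \<in> J \<Longrightarrow> c-lipschitz_on UNIV (f j)"
    and A: "compact A" "A \<noteq> {}" "A = (\<Union>j\<in>J. f j ` A)"
    and B: "compact B" "B \<noteq> {}" "B = (\<Union>j\<in>J. f j ` B)"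
  shows "A = B"
proof -
  have "X \<subseteq> Y" if X: "compact X" "X = (\<Union>j\<in>J. f j ` X)"
    and Y: "compact Y" "Y \<noteq> {}" "Y = (\<Union>j\<in>J. f j ` Y)" for X Y
  proof (rule self_covering_subset_invariant[OF contr])
    show "f j ` Y \<subseteq> Y" if "j \<in> J" for j
      using that by (subst (2) Y(3)) blast
  qed (use X(1) equalityD1[OF X(2)] Y(1,2) in \<open>auto intro: compact_imp_closed\<close>)
  then show ?thesis
    using A B by (meson subset_antisym)
qed

lemma setdist_Un_right:
  assumes "T \<noteq> {}" "U \<noteq> {}"
  shows "setdist S (T \<union> U) = min (setdist S T) (setdist S U)"
proof (cases "S = {}")
  case False
  show ?thesis
  proof (rule antisym)
    show "setdist S (T \<union> U) \<le> min (setdist S T) (setdist S U)"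
      using assms by (simp add: setdist_subset_right)
    show "min (setdist S T) (setdist S U) \<le> setdist S (T \<union> U)"
      using False assms
      by (intro le_setdistI) (auto intro: min.coboundedI1 min.coboundedI2 setdist_le_dist)
  qed
qed simp

lemma setdist_isometry_image:
  assumes "\<And>x y. dist (f x) (f y) = dist x y"
  shows "setdist (f ` S) (f ` T) = setdist S T"
proof (cases "S = {} \<or> T = {}")
  case False
  show ?thesis
  proof (rule antisym)
    show "setdist (f ` S) (f ` T) \<le> setdist S T"
      using False assms by (intro le_setdistI) (auto intro: setdist_le_dist simp flip: assms)
    show "setdist S T \<le> setdist (f ` S) (f ` T)"
      using False assms by (intro le_setdistI) (auto intro: setdist_le_dist)
  qed
qed auto

lemma le_setdist_Im:
  assumes "S \<noteq> {}" "T \<noteq> {}" "\<And>x y. x \<in> S \<Longrightarrow> y \<in> T \<Longrightarrow> b \<le> Im y - Im x"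
  shows "b \<le> setdist S T"
proof (rule le_setdistI[OF assms(1,2)])
  fix x y assume "x \<in> S" "y \<in> T"
  then have "b \<le> \<bar>Im (x - y)\<bar>" using assms(3) by fastforce
  also have "\<dots> \<le> dist x y" using abs_Im_le_cmod[of "x - y"] by (simp add: dist_norm)
  finally show "b \<le> dist x y" .
qed

lemma theta_eq_cis: "theta lam j = lam * cis ((-1) ^ j * pi / 3)"
  unfolding theta_def cis_conv_exp by (simp add: mult_ac)

lemma lipschitz_fmap:
  assumes "0 \<le> lam"
  shows "lam-lipschitz_on UNIV (fmap lam j)"
proof (rule lipschitz_onI)
  fix z w :: complex
  have "fmap lam j z - fmap lam j w = theta lam j * (z - w)"
    unfolding fmap_def by (simp add: algebra_simps)
  then show "dist (fmap lam j z) (fmap lam j w) \<le> lam * dist z w"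
    using assms by (simp add: dist_norm norm_mult theta_eq_cis)
qed (rule assms)

lemma cnj_fmap:
  shows "cnj (fmap lam 1 z) = fmap lam 2 (cnj z)"
    and "cnj (fmap lam 2 z) = fmap lam 1 (cnj z)"
  unfolding fmap_def theta_eq_cis by (simp_all add: cis_cnj)

lemma UN_fmap_1_2: "(\<Union>j\<in>{1, 2}. fmap lam j ` A) = fmap lam 1 ` A \<union> fmap lam 2 ` A"
  by simp

lemma attractor_subset_closed_invariant:
  assumes lam: "0 < lam" "lam < 1" and A: "compact A" "A = fmap lam 1 ` A \<union> fmap lam 2 ` A"
    and S: "closed S" "S \<noteq> {}" "\<And>j. j \<in> {1, 2} \<Longrightarrow> fmap lam j ` S \<subseteq> S"
  shows "A \<subseteq> S"
proof (rule self_covering_subset_invariant[of lam "{1, 2}" "fmap lam"])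
  show "A \<subseteq> (\<Union>j\<in>{1, 2}. fmap lam j ` A)"
    unfolding UN_fmap_1_2 using A(2) by (rule equalityD1)
qed (use lam A(1) S lipschitz_fmap[of lam] in auto)

lemma cnj_attractor:
  assumes lam: "0 < lam" "lam < 1"
    and A: "compact A" "A \<noteq> {}" "A = fmap lam 1 ` A \<union> fmap lam 2 ` A"
  shows "cnj ` A = A"
proof (rule self_similar_unique[of lam "{1, 2}" "fmap lam"])
  have "cnj ` A = cnj ` fmap lam 1 ` A \<union> cnj ` fmap lam 2 ` A"
    using A(3) by (metis image_Un)
  also have "\<dots> = fmap lam 2 ` cnj ` A \<union> fmap lam 1 ` cnj ` A"
    by (simp only: image_image cnj_fmap)
  finally show "cnj ` A = (\<Union>j\<in>{1, 2}. fmap lam j ` cnj ` A)"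
    unfolding UN_fmap_1_2 by (simp only: Un_commute)
  show "A = (\<Union>j\<in>{1, 2}. fmap lam j ` A)"
    unfolding UN_fmap_1_2 by (rule A(3))
  show "compact (cnj ` A)"
    by (intro compact_continuous_image continuous_intros A(1))
qed (use lam A(1,2) lipschitz_fmap[of lam] in auto)

definition hex_normal :: "real \<Rightarrow> nat \<Rightarrow> complex" where
  "hex_normal \<alpha> k = cis (\<alpha> + real k * pi / 3)"

definition hexagon :: "real \<Rightarrow> (nat \<Rightarrow> real) \<Rightarrow> complex set" where
  "hexagon \<alpha> h = {z. \<forall>k<6. Re (cnj (hex_normal \<alpha> k) * z) \<le> h k}"

lemma closed_hexagon: "closed (hexagon \<alpha> h)"
  unfolding hexagon_def
  by (intro closed_Collect_all closed_Collect_imp closed_Collect_le continuous_intros) auto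

lemma hex_normal_mod: "hex_normal \<alpha> (k mod 6) = hex_normal \<alpha> k"
proof -
  have "real k = real (k mod 6) + 6 * real (k div 6)"
    by (metis mod_mult_div_eq of_nat_add of_nat_mult of_nat_numeral)
  then have "\<alpha> + real k * pi / 3 = (\<alpha> + real (k mod 6) * pi / 3) + 2 * pi * real (k div 6)"
    by (simp add: field_simps)
  then have "cis (\<alpha> + real k * pi / 3)
      = cis (\<alpha> + real (k mod 6) * pi / 3) * cis (2 * pi * real (k div 6))"
    by (simp only: cis_mult)
  then show ?thesis
    unfolding hex_normal_def by simp
qed

lemma hex_normal_Suc: "hex_normal \<alpha> (Suc k) = hex_normal \<alpha> k * cis (pi / 3)"
  unfolding hex_normal_def cis_mult by (simp add: algebra_simps add_divide_distrib)

lemma hex_normal_add5: "hex_normal \<alpha> (k + 5) = hex_normal \<alpha> k * cis (- pi / 3)"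
proof -
  have "\<alpha> + real (k + 5) * pi / 3 = (\<alpha> + real k * pi / 3 - pi / 3) + 2 * pi * 1"
    by (simp add: field_simps)
  then have "cis (\<alpha> + real (k + 5) * pi / 3) = cis (\<alpha> + real k * pi / 3 + - pi / 3) * cis (2 * pi * 1)"
    by (simp only: cis_mult diff_conv_add_uminus minus_divide_left)
  then show ?thesis
    unfolding hex_normal_def by (simp add: cis_mult)
qed

lemma hex_normal_add3: "hex_normal \<alpha> (k + 3) = - hex_normal \<alpha> k"
proof -
  have "\<alpha> + real (k + 3) * pi / 3 = (\<alpha> + real k * pi / 3) + pi"
    by (simp add: field_simps)
  then have "cis (\<alpha> + real (k + 3) * pi / 3) = cis (\<alpha> + real k * pi / 3) * cis pi"
    by (simp only: cis_mult)
  then show ?thesis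
    unfolding hex_normal_def by simp
qed

lemma Re_hex_normal_fmap:
  shows "Re (cnj (hex_normal \<alpha> k) * fmap lam 1 z)
           = Re (hex_normal \<alpha> k) + lam * Re (cnj (hex_normal \<alpha> ((k + 1) mod 6)) * z)"
    and "Re (cnj (hex_normal \<alpha> k) * fmap lam 2 z)
           = Re (hex_normal \<alpha> k) + lam * Re (cnj (hex_normal \<alpha> ((k + 5) mod 6)) * z)"
proof -
  have "cnj (hex_normal \<alpha> k) * theta lam 1 = lam * cnj (hex_normal \<alpha> ((k + 1) mod 6))"
    by (simp add: hex_normal_mod hex_normal_Suc theta_eq_cis cis_cnj)
  then show "Re (cnj (hex_normal \<alpha> k) * fmap lam 1 z)
           = Re (hex_normal \<alpha> k) + lam * Re (cnj (hex_normal \<alpha> ((k + 1) mod 6)) * z)"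
    unfolding fmap_def by (simp add: distrib_left mult.assoc [symmetric])
  have "cnj (hex_normal \<alpha> k) * theta lam 2 = lam * cnj (hex_normal \<alpha> ((k + 5) mod 6))"
    by (simp add: hex_normal_mod hex_normal_add5 theta_eq_cis cis_cnj)
  then show "Re (cnj (hex_normal \<alpha> k) * fmap lam 2 z)
           = Re (hex_normal \<alpha> k) + lam * Re (cnj (hex_normal \<alpha> ((k + 5) mod 6)) * z)"
    unfolding fmap_def by (simp add: distrib_left mult.assoc [symmetric])
qed

lemma fmap_hexagon_subset:
  fixes j :: nat and h :: "nat \<Rightarrow> real" and lam :: real
  assumes "0 \<le> lam" "j \<in> {1, 2}"
    and "\<And>k. k < 6 \<Longrightarrow> Re (hex_normal \<alpha> k) + lam * h ((k + 1) mod 6) \<le> h k"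
    and "\<And>k. k < 6 \<Longrightarrow> Re (hex_normal \<alpha> k) + lam * h ((k + 5) mod 6) \<le> h k"
  shows "fmap lam j ` hexagon \<alpha> h \<subseteq> hexagon \<alpha> h"
proof (rule image_subsetI)
  fix z assume "z \<in> hexagon \<alpha> h"
  then have z: "\<And>k. k < 6 \<Longrightarrow> Re (cnj (hex_normal \<alpha> k) * z) \<le> h k"
    by (simp add: hexagon_def)
  have "Re (cnj (hex_normal \<alpha> k) * fmap lam j z) \<le> h k" if "k < 6" for k
  proof (cases "j = 1")
    case True
    have "lam * Re (cnj (hex_normal \<alpha> ((k + 1) mod 6)) * z) \<le> lam * h ((k + 1) mod 6)"
      using z assms(1) by (simp add: mult_left_mono)
    then show ?thesis
      unfolding True using assms(3)[OF \<open>k < 6\<close>] Re_hex_normal_fmap(1)[of \<alpha> k lam z] by linarith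
  next
    case False
    with assms(2) have "j = 2" by simp
    have "lam * Re (cnj (hex_normal \<alpha> ((k + 5) mod 6)) * z) \<le> lam * h ((k + 5) mod 6)"
      using z assms(1) by (simp add: mult_left_mono)
    then show ?thesis
      unfolding \<open>j = 2\<close> using assms(4)[OF \<open>k < 6\<close>] Re_hex_normal_fmap(2)[of \<alpha> k lam z] by linarith
  qed
  then show "fmap lam j z \<in> hexagon \<alpha> h"
    by (simp add: hexagon_def)
qed

lemma hex_normal_0:
  "k < 6 \<Longrightarrow> hex_normal 0 k = [1, Complex (1/2) (sqrt 3 / 2), Complex (-1/2) (sqrt 3 / 2),
     -1, Complex (-1/2) (- sqrt 3 / 2), Complex (1/2) (- sqrt 3 / 2)] ! k"
proof -
  assume "k < 6"
  have n0: "hex_normal 0 0 = 1" by (simp add: hex_normal_def)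
  have n1: "hex_normal 0 1 = Complex (1/2) (sqrt 3 / 2)"
    by (simp add: hex_normal_def cis.ctr cos_60 sin_60)
  have n2: "hex_normal 0 2 = Complex (-1/2) (sqrt 3 / 2)"
  proof -
    have "hex_normal 0 2 = cis (pi / 3) * cis (pi / 3)"
      by (simp add: hex_normal_def cis_mult)
    then show ?thesis
      by (simp add: cis.ctr cos_60 sin_60 complex_eq_iff)
  qed
  have "k \<in> {0, 1, 2, 3, 4, 5}" using \<open>k < 6\<close> by auto
  then show ?thesis
    using hex_normal_add3[of 0 0] hex_normal_add3[of 0 1] hex_normal_add3[of 0 2] n0 n1 n2
    by (auto simp: complex_eq_iff)
qed

lemma hex_normal_30:
  "k < 6 \<Longrightarrow> hex_normal (pi / 6) k = [Complex (sqrt 3 / 2) (1/2), \<i>, Complex (- sqrt 3 / 2) (1/2),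
     Complex (- sqrt 3 / 2) (-1/2), - \<i>, Complex (sqrt 3 / 2) (-1/2)] ! k"
proof -
  assume "k < 6"
  have "hex_normal (pi / 6) k = cis (pi / 6) * hex_normal 0 k"
    by (simp add: hex_normal_def cis_mult)
  also have "cis (pi / 6) = Complex (sqrt 3 / 2) (1/2)"
    by (simp add: cis.ctr cos_30 sin_30)
  finally show ?thesis
    using hex_normal_0[OF \<open>k < 6\<close>] \<open>k < 6\<close>
    by (auto simp: complex_eq_iff less_Suc_eq numeral_eq_Suc)
qed

lemma add_mult_divide_le_divide:
  fixes d :: real
  assumes "0 < d" "c * d + l * a \<le> b"
  shows "c + l * (a / d) \<le> b / d"
proof -
  have "(c * d + l * a) / d \<le> b / d" using assms by (simp add: divide_right_mono)
  then show ?thesis using \<open>0 < d\<close> by (simp add: add_divide_distrib)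
qed

(* The support values of A in the directions hex_normal 0 k and hex_normal (pi / 6) k: the
   solutions of h_k = Re u_k + lambda max(h_(k-1), h_(k+1)), the recursion satisfied by the
   support function of A. *)
definition hex_support_0 :: "real \<Rightarrow> nat \<Rightarrow> real" where
  "hex_support_0 lam k = [2 + lam, 1 + 2*lam, -1 + lam + 3*lam^2, -2 - lam + 3*lam^2 + 3*lam^3,
     -1 + lam + 3*lam^2, 1 + 2*lam] ! k / (2 * (1 - lam^2))"

definition hex_support_30 :: "real \<Rightarrow> nat \<Rightarrow> real" where
  "hex_support_30 lam k = sqrt 3 * [1, lam, -1 + lam + lam^2, -1 + lam + lam^2, lam, 1] ! k / (2 * (1 - lam))"

lemma fmap_hexagon_0:
  fixes j :: nat
  assumes "0 < lam" "lam < 1" "j \<in> {1, 2}"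
  shows "fmap lam j ` hexagon 0 (hex_support_0 lam) \<subseteq> hexagon 0 (hex_support_0 lam)"
proof (rule fmap_hexagon_subset[OF _ assms(3)])
  have d: "0 < 2 * (1 - lam^2)" using assms by (simp add: abs_square_less_1)
  have slack: "0 \<le> lam * (1 - lam^2)" "0 \<le> lam^2 * (1 - lam^2)"
    using assms d by simp_all
  fix k :: nat assume "k < 6"
  then have k: "k = 0 \<or> k = 1 \<or> k = 2 \<or> k = 3 \<or> k = 4 \<or> k = 5" by auto
  show "Re (hex_normal 0 k) + lam * hex_support_0 lam ((k + 1) mod 6) \<le> hex_support_0 lam k"
    unfolding hex_support_0_def
    by (rule add_mult_divide_le_divide[OF d])
      (use k slack in \<open>elim disjE; simp add: hex_normal_0 algebra_simps power2_eq_square power3_eq_cube\<close>)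
  show "Re (hex_normal 0 k) + lam * hex_support_0 lam ((k + 5) mod 6) \<le> hex_support_0 lam k"
    unfolding hex_support_0_def
    by (rule add_mult_divide_le_divide[OF d])
      (use k slack in \<open>elim disjE; simp add: hex_normal_0 algebra_simps power2_eq_square power3_eq_cube\<close>)
qed (use assms in simp)

lemma fmap_hexagon_30:
  fixes j :: nat
  assumes "0 < lam" "lam < 1" "j \<in> {1, 2}"
  shows "fmap lam j ` hexagon (pi / 6) (hex_support_30 lam) \<subseteq> hexagon (pi / 6) (hex_support_30 lam)"
proof (rule fmap_hexagon_subset[OF _ assms(3)])
  have d: "0 < 2 * (1 - lam)" using assms by simp
  have slack: "0 \<le> sqrt 3 * lam * (1 - lam)" "0 \<le> sqrt 3 * lam^2 * (1 - lam)"
    using assms by simp_all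
  fix k :: nat assume "k < 6"
  then have k: "k = 0 \<or> k = 1 \<or> k = 2 \<or> k = 3 \<or> k = 4 \<or> k = 5" by auto
  show "Re (hex_normal (pi / 6) k) + lam * hex_support_30 lam ((k + 1) mod 6) \<le> hex_support_30 lam k"
    unfolding hex_support_30_def
    by (rule add_mult_divide_le_divide[OF d])
      (use k slack in \<open>elim disjE; simp add: hex_normal_30 algebra_simps power2_eq_square\<close>)
  show "Re (hex_normal (pi / 6) k) + lam * hex_support_30 lam ((k + 5) mod 6) \<le> hex_support_30 lam k"
    unfolding hex_support_30_def
    by (rule add_mult_divide_le_divide[OF d])
      (use k slack in \<open>elim disjE; simp add: hex_normal_30 algebra_simps power2_eq_square\<close>)
qed (use assms in simp)

lemma hexagon_0_nonempty:
  assumes "0 < lam" "lam < 1"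
  shows "of_real (hex_support_0 lam 0) \<in> hexagon 0 (hex_support_0 lam)"
  unfolding hexagon_def
proof (intro CollectI allI impI)
  have d: "0 < 2 * (1 - lam^2)" using assms by (simp add: abs_square_less_1)
  fix k :: nat assume "k < 6"
  then have k: "k = 0 \<or> k = 1 \<or> k = 2 \<or> k = 3 \<or> k = 4 \<or> k = 5" by auto
  have "0 + Re (hex_normal 0 k) * hex_support_0 lam 0 \<le> hex_support_0 lam k"
    unfolding hex_support_0_def
    by (rule add_mult_divide_le_divide[OF d])
      (use k assms in \<open>elim disjE; simp add: hex_normal_0 field_simps\<close>)
  then show "Re (cnj (hex_normal 0 k) * of_real (hex_support_0 lam 0)) \<le> hex_support_0 lam k"
    by simp
qed

lemma hexagon_30_nonempty:
  assumes "0 < lam" "lam < 1"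
  shows "of_real (1 / (1 - lam)) \<in> hexagon (pi / 6) (hex_support_30 lam)"
  unfolding hexagon_def
proof (intro CollectI allI impI)
  have d: "0 < 2 * (1 - lam)" using assms by simp
  fix k :: nat assume "k < 6"
  then have k: "k = 0 \<or> k = 1 \<or> k = 2 \<or> k = 3 \<or> k = 4 \<or> k = 5" by auto
  have w: "1 / (1 - lam) = 2 / (2 * (1 - lam))" using d by (simp add: field_simps)
  have "0 + Re (hex_normal (pi / 6) k) * (1 / (1 - lam)) \<le> hex_support_30 lam k"
    unfolding w hex_support_30_def
    by (rule add_mult_divide_le_divide[OF d])
      (use k assms in \<open>elim disjE; simp add: hex_normal_30 field_simps\<close>)
  then show "Re (cnj (hex_normal (pi / 6) k) * of_real (1 / (1 - lam))) \<le> hex_support_30 lam k"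
    by simp
qed

lemma Re_ge_of_hexagon_0:
  assumes "0 < lam" "lam < 1" "z \<in> hexagon 0 (hex_support_0 lam)"
  shows "1 + lam / 2 - lam^2 * (1 + 2 * lam) / (2 * (1 - lam^2)) \<le> Re z"
proof -
  have "Re (cnj (hex_normal 0 3) * z) \<le> hex_support_0 lam 3"
    using assms(3) unfolding hexagon_def by simp
  then have "- Re z \<le> hex_support_0 lam 3"
    using hex_normal_0[of 3] by simp
  moreover have "1 - lam^2 \<noteq> 0"
    using assms by (simp add: abs_square_eq_1)
  then have "hex_support_0 lam 3 = - (1 + lam / 2 - lam^2 * (1 + 2 * lam) / (2 * (1 - lam^2)))"
    by (simp add: hex_support_0_def field_simps power2_eq_square power3_eq_cube)
  ultimately show ?thesis by linarith
qed

lemma Im_gap_of_hexagon_30: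
  assumes "0 < lam" "lam < 1"
    and "z \<in> hexagon (pi / 6) (hex_support_30 lam)" "w \<in> hexagon (pi / 6) (hex_support_30 lam)"
  shows "sqrt 3 * lam - sqrt 3 * lam^3 / (1 - lam) \<le> Im (fmap lam 2 w) - Im (fmap lam 1 z)"
proof -
  \<comment> \<open>Im and -Im are the components along the normals k = 1 and k = 4 (i and -i), which f_1 and
    f_2 pull back to the normals k = 2 and k = 3.\<close>
  have z: "Re (cnj (hex_normal (pi / 6) 2) * z) \<le> hex_support_30 lam 2"
    and w: "Re (cnj (hex_normal (pi / 6) 3) * w) \<le> hex_support_30 lam 3"
    using assms(3,4) unfolding hexagon_def by simp_all
  have "Im (fmap lam 1 z) = lam * Re (cnj (hex_normal (pi / 6) 2) * z)"
    using Re_hex_normal_fmap(1)[of "pi / 6" 1 lam z] by (simp add: hex_normal_30)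
  also have "\<dots> \<le> lam * hex_support_30 lam 2"
    using z assms(1) by (simp add: mult_left_mono)
  finally have "Im (fmap lam 1 z) \<le> lam * hex_support_30 lam 2" .
  moreover have "- Im (fmap lam 2 w) = lam * Re (cnj (hex_normal (pi / 6) 3) * w)"
    using Re_hex_normal_fmap(2)[of "pi / 6" 4 lam w] by (simp add: hex_normal_30)
  moreover have "\<dots> \<le> lam * hex_support_30 lam 3"
    using w assms(1) by (simp add: mult_left_mono)
  moreover have "sqrt 3 * lam - sqrt 3 * lam^3 / (1 - lam)
      = - (lam * hex_support_30 lam 2) - lam * hex_support_30 lam 3"
  proof -
    have "1 - lam \<noteq> 0" using assms by simp
    then show ?thesis
      by (simp add: hex_support_30_def divide_simps) algebra
  qed
  ultimately show ?thesis by linarith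
qed

lemma cnj_Yline: "cnj ` Yline = Yline"
  by (force simp: Yline_def intro: image_eqI[where x = "cnj z" for z])

lemma le_setdist_Yline:
  assumes "S \<noteq> {}" "\<And>z. z \<in> S \<Longrightarrow> b \<le> Re z"
  shows "b \<le> setdist Yline S"
proof (rule le_setdistI)
  have "0 \<in> Yline" by (simp add: Yline_def)
  then show "Yline \<noteq> {}" by blast
  fix y z assume "y \<in> Yline" "z \<in> S"
  then have "b \<le> \<bar>Re (z - y)\<bar>" using assms(2)[of z] by (simp add: Yline_def)
  also have "\<dots> \<le> dist y z" using abs_Re_le_cmod[of "z - y"] by (simp add: dist_norm norm_minus_commute)
  finally show "b \<le> dist y z" .
qed (rule assms(1))

lemma setdist_Yline_fmap:
  assumes "A \<noteq> {}" "A = fmap lam 1 ` A \<union> fmap lam 2 ` A" "cnj ` A = A" "j \<in> {1, 2}"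
  shows "setdist Yline (fmap lam j ` A) = setdist Yline A"
proof -
  have "fmap lam 2 ` A = cnj ` fmap lam 1 ` A"
    using assms(3) by (metis (no_types, lifting) image_cong image_image cnj_fmap(1))
  then have "setdist Yline (fmap lam 2 ` A) = setdist Yline (fmap lam 1 ` A)"
    using setdist_isometry_image[of cnj Yline "fmap lam 1 ` A"]
    by (simp add: cnj_Yline dist_norm flip: complex_cnj_diff)
  moreover have "setdist Yline A = min (setdist Yline (fmap lam 1 ` A)) (setdist Yline (fmap lam 2 ` A))"
  proof -
    have "setdist Yline A = setdist Yline (fmap lam 1 ` A \<union> fmap lam 2 ` A)"
      using assms(2) by (rule arg_cong)
    then show ?thesis
      using assms(1) by (simp add: setdist_Un_right)
  qed
  ultimately show ?thesis
    using assms(4) by auto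
qed

theorem lemma3p4:
  fixes lam :: real and A :: "complex set"
  assumes "0 < lam" and "lam < 1"
    and "compact A" and "A \<noteq> {}"
    and "A = fmap lam 1 ` A \<union> fmap lam 2 ` A"
  shows "(\<forall>j\<in>{1,2::nat}. setdist Yline (fmap lam j ` A) = setdist Yline A)
       \<and> setdist Yline A \<ge> 1 + lam / 2 - lam^2 * (1 + 2 * lam) / (2 * (1 - lam^2))
       \<and> setdist (fmap lam 1 ` A) (fmap lam 2 ` A) \<ge> sqrt 3 * lam - sqrt 3 * lam^3 / (1 - lam)"
proof (intro conjI ballI)
  note lam = assms(1,2)
  show "setdist Yline (fmap lam j ` A) = setdist Yline A" if "j \<in> {1, 2}" for j
    using setdist_Yline_fmap[OF assms(4,5) cnj_attractor[OF assms] that] .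
  have "A \<subseteq> hexagon 0 (hex_support_0 lam)"
    using hexagon_0_nonempty[OF lam] fmap_hexagon_0[OF lam]
    by (intro attractor_subset_closed_invariant[OF lam assms(3,5) closed_hexagon]) auto
  then show "setdist Yline A \<ge> 1 + lam / 2 - lam^2 * (1 + 2 * lam) / (2 * (1 - lam^2))"
    using Re_ge_of_hexagon_0[OF lam] by (intro le_setdist_Yline[OF assms(4)]) auto
  have "A \<subseteq> hexagon (pi / 6) (hex_support_30 lam)"
    using hexagon_30_nonempty[OF lam] fmap_hexagon_30[OF lam]
    by (intro attractor_subset_closed_invariant[OF lam assms(3,5) closed_hexagon]) auto
  then show "setdist (fmap lam 1 ` A) (fmap lam 2 ` A) \<ge> sqrt 3 * lam - sqrt 3 * lam^3 / (1 - lam)"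
    using Im_gap_of_hexagon_30[OF lam] assms(4) by (intro le_setdist_Im) auto
qed

end
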